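(* There exists a constant $C>0$ such that for all integers $n\geq2$ and all $p\in[0,1]$, $$\frac{1}{n-1}\,\mathbb{E}_{n,p}[\tau]\leq C.$$
   Context: $G(n,p)$ is the Erdős–Rényi random graph on $[n]=\{1,\dots,n\}$ with independent edge probability $p$. Given a realization, $(X_t)_{t\ge0}$ is the simple symmetric random walk with $X_0=1$ and $\tau=\inf\{t\ge1:X_t=1\}$, with the convention $\tau=1$ if vertex $1$ is isolated. $\mathbb{E}_{n,p}[\tau]$ is the expectation of $\tau$ over both the walk and the random graph. *)

theory Defs
  imports Complex_Main "HOL-Library.Extended_Nonnegative_Real"
begin

text \<open>Possible edges of a simple graph on [n] = {1..n}: pairs (i,j) with i < j.
  A graph is a set E of such pairs.\<close>
definition pairs :: "nat \<Rightarrow> (nat \<times> nat) set" where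
  "pairs n = {(i, j). 1 \<le> i \<and> i < j \<and> j \<le> n}"

definition adj :: "(nat \<times> nat) set \<Rightarrow> nat \<Rightarrow> nat \<Rightarrow> bool" where
  "adj E u v \<longleftrightarrow> (u, v) \<in> E \<or> (v, u) \<in> E"

definition deg :: "(nat \<times> nat) set \<Rightarrow> nat \<Rightarrow> nat \<Rightarrow> nat" where
  "deg E n u = card {v \<in> {1..n}. adj E u v}"

text \<open>Transition probability of simple random walk (0 from an isolated vertex).\<close>
definition trans :: "(nat \<times> nat) set \<Rightarrow> nat \<Rightarrow> nat \<Rightarrow> nat \<Rightarrow> real" where
  "trans E n u v = (if adj E u v then 1 / real (deg E n u) else 0)"

fun walkprob :: "(nat \<times> nat) set \<Rightarrow> nat \<Rightarrow> nat \<Rightarrow> nat list \<Rightarrow> real" where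
  "walkprob E n u [] = 1"
| "walkprob E n u (v # vs) = trans E n u v * walkprob E n v vs"

text \<open>P(tau > t): X_0 = 1 and X_1, ..., X_t all different from 1.
  (If 1 is isolated, P(tau > 1) = 0, i.e. tau = 1.)\<close>
definition surv :: "(nat \<times> nat) set \<Rightarrow> nat \<Rightarrow> nat \<Rightarrow> real" where
  "surv E n t = (\<Sum>xs \<in> {xs. length xs = t \<and> set xs \<subseteq> {2..n}}. walkprob E n 1 xs)"

text \<open>E[tau] for fixed graph, via the tail-sum formula E[tau] = sum_{t>=0} P(tau > t)
  (valid for any [1,\<infinity>]-valued tau; computed in ennreal).\<close>
definition exp_tau_graph :: "(nat \<times> nat) set \<Rightarrow> nat \<Rightarrow> ennreal" where
  "exp_tau_graph E n = (\<Sum>t. ennreal (surv E n t))"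

definition exp_tau :: "nat \<Rightarrow> real \<Rightarrow> ennreal" where
  "exp_tau n p = (\<Sum>E \<in> Pow (pairs n).
      ennreal (p ^ card E * (1 - p) ^ (card (pairs n) - card E)) * exp_tau_graph E n)"

end

theory Submission
  imports Defs
begin

(* For a fixed graph the degree function is a stationary measure of the walk, so deg 1 times the
   expected number of visits to v strictly before the return to 1 is at most deg v.  Summing over v
   gives Kac's bound deg 1 * E[tau] <= 2 |E| (and tau = 1 if vertex 1 is isolated), hence
   E[tau] <= 2 + 4 b / (a + 1), where a = deg 1 and b is the number of edges not at 1.
   Under G(n,p), a ~ Bin(n-1,p) and b ~ Bin(N,p) with N < n^2 are independent, E[b] = N p and
   p E[1/(a+1)] <= 1/n, so E_{n,p}[tau] <= 2 + 4 N / n = O(n). *)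

lemma sum_lists_length_Suc_snoc:
  "(\<Sum>xs | length xs = Suc t \<and> set xs \<subseteq> A. f xs)
     = (\<Sum>x\<in>A. \<Sum>ys | length ys = t \<and> set ys \<subseteq> A. f (ys @ [x]))"
proof -
  have "(\<Sum>xs | length xs = Suc t \<and> set xs \<subseteq> A. f xs)
      = (\<Sum>(x, ys) \<in> A \<times> {ys. length ys = t \<and> set ys \<subseteq> A}. f (ys @ [x]))"
  proof (rule sum.reindex_bij_witness[where i = "\<lambda>(x, ys). ys @ [x]"
                                        and j = "\<lambda>xs. (last xs, butlast xs)"])
    fix xs assume "xs \<in> {xs. length xs = Suc t \<and> set xs \<subseteq> A}"
    then show "(last xs, butlast xs) \<in> A \<times> {ys. length ys = t \<and> set ys \<subseteq> A}"
      and "(case (last xs, butlast xs) of (x, ys) \<Rightarrow> ys @ [x]) = xs"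
      and "(case (last xs, butlast xs) of (x, ys) \<Rightarrow> f (ys @ [x])) = f xs"
      by (cases xs rule: rev_cases; auto)+
  qed auto
  then show ?thesis
    by (simp add: sum.cartesian_product)
qed

lemma trans_nonneg: "trans E n u v \<ge> 0"
  by (simp add: trans_def)

lemma walkprob_nonneg: "walkprob E n u xs \<ge> 0"
  by (induction xs arbitrary: u) (auto simp: trans_nonneg)

lemma walkprob_snoc:
  "walkprob E n u (xs @ [v]) = walkprob E n u xs * trans E n (last (u # xs)) v"
  by (induction xs arbitrary: u) auto

lemma surv_nonneg: "surv E n t \<ge> 0"
  unfolding surv_def by (intro sum_nonneg) (simp add: walkprob_nonneg)

lemma surv_0: "surv E n 0 = 1"
proof -
  have "{xs. length xs = 0 \<and> set xs \<subseteq> {2..n}} = {[]}" by auto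
  then show ?thesis by (simp add: surv_def)
qed

lemma surv_Suc_isolated:
  assumes "deg E n 1 = 0"
  shows "surv E n (Suc t) = 0"
proof -
  have "walkprob E n 1 xs = 0" if "length xs = Suc t" for xs
    using that assms by (cases xs) (auto simp: trans_def)
  then show ?thesis
    unfolding surv_def by (intro sum.neutral) auto
qed

definition taboo :: "(nat \<times> nat) set \<Rightarrow> nat \<Rightarrow> nat \<Rightarrow> nat \<Rightarrow> real" where
  "taboo E n t v = (\<Sum>xs | length xs = t \<and> set xs \<subseteq> {2..n}. walkprob E n 1 (xs @ [v]))"

lemma taboo_0: "taboo E n 0 v = trans E n 1 v"
proof -
  have "{xs. length xs = 0 \<and> set xs \<subseteq> {2..n}} = {[]}" by auto
  then show ?thesis by (simp add: taboo_def)
qed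

lemma taboo_Suc: "taboo E n (Suc t) v = (\<Sum>x\<in>{2..n}. taboo E n t x * trans E n x v)"
  unfolding taboo_def sum_lists_length_Suc_snoc sum_distrib_right
  using walkprob_snoc[of E n 1 "ys @ [x]" v for ys x] by simp

lemma surv_Suc: "surv E n (Suc t) = (\<Sum>v\<in>{2..n}. taboo E n t v)"
  unfolding surv_def taboo_def by (rule sum_lists_length_Suc_snoc)

lemma pairs_subset: "pairs n \<subseteq> {1..n} \<times> {1..n}"
  by (auto simp: pairs_def)

lemma finite_pairs: "finite (pairs n)"
  using pairs_subset by (rule finite_subset) simp

lemma card_pairs_le: "card (pairs n) \<le> n * n"
  using card_mono[OF _ pairs_subset] by simp

lemma vertices_eq_insert_1: "1 \<le> n \<Longrightarrow> {1..n} = insert (1::nat) {2..n}"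
  by auto

lemma deg_mult_trans:
  assumes "v \<in> {1..n}"
  shows "real (deg E n u) * trans E n u v = (if adj E u v then 1 else 0)"
proof -
  have "adj E u v \<Longrightarrow> deg E n u > 0"
    using assms unfolding deg_def by (subst card_gt_0_iff) auto
  then show ?thesis by (auto simp: trans_def)
qed

lemma sum_deg_mult_trans:
  assumes "v \<in> {1..n}"
  shows "(\<Sum>u\<in>{1..n}. real (deg E n u) * trans E n u v) = real (deg E n v)"
proof -
  have "(\<Sum>u\<in>{1..n}. real (deg E n u) * trans E n u v) = real (card {u \<in> {1..n}. adj E u v})"
    by (simp add: deg_mult_trans[OF assms] flip: sum.inter_filter)
  also have "{u \<in> {1..n}. adj E u v} = {u \<in> {1..n}. adj E v u}"
    by (auto simp: adj_def)
  finally show ?thesis by (simp add: deg_def)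
qed

lemma sum_deg_le_twice_card:
  assumes "E \<subseteq> pairs n"
  shows "(\<Sum>v\<in>{1..n}. deg E n v) \<le> 2 * card E"
proof -
  have "finite E"
    using assms finite_pairs by (rule finite_subset)
  have "(\<Sum>v\<in>{1..n}. deg E n v) = card (SIGMA v:{1..n}. {u \<in> {1..n}. adj E v u})"
    unfolding deg_def by (simp add: card_SigmaI)
  also have "\<dots> \<le> card (E \<union> E\<inverse>)"
    using \<open>finite E\<close> by (intro card_mono) (auto simp: adj_def)
  also have "\<dots> \<le> 2 * card E"
    using card_Un_le[of E "E\<inverse>"] by simp
  finally show ?thesis .
qed

lemma deg_mult_sum_taboo_le:
  assumes "1 \<le> n" "v \<in> {1..n}"
  shows "real (deg E n 1) * (\<Sum>t<T. taboo E n t v) \<le> real (deg E n v)"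
  using assms(2)
proof (induction T arbitrary: v)
  case 0
  then show ?case by simp
next
  case (Suc T)
  have "real (deg E n 1) * (\<Sum>t<Suc T. taboo E n t v)
      = real (deg E n 1) * trans E n 1 v
        + (\<Sum>x\<in>{2..n}. (real (deg E n 1) * (\<Sum>t<T. taboo E n t x)) * trans E n x v)"
    by (simp add: sum.lessThan_Suc_shift taboo_0 taboo_Suc distrib_left sum_distrib_left
        sum_distrib_right mult.assoc sum.swap[where A = "{..<T}"] del: sum.lessThan_Suc)
  also have "\<dots> \<le> real (deg E n 1) * trans E n 1 v + (\<Sum>x\<in>{2..n}. real (deg E n x) * trans E n x v)"
    using Suc.IH by (intro add_left_mono sum_mono mult_right_mono) (auto simp: trans_nonneg)
  also have "\<dots> = (\<Sum>x\<in>{1..n}. real (deg E n x) * trans E n x v)"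
    unfolding vertices_eq_insert_1[OF assms(1)] by simp
  also have "\<dots> = real (deg E n v)"
    by (rule sum_deg_mult_trans[OF Suc.prems])
  finally show ?case .
qed

lemma deg_mult_sum_surv_le:
  assumes "E \<subseteq> pairs n" "1 \<le> n"
  shows "real (deg E n 1) * (\<Sum>t<T. surv E n t) \<le> 2 * real (card E)"
proof (cases T)
  case 0
  then show ?thesis by simp
next
  case (Suc T')
  have "real (deg E n 1) * (\<Sum>t<T. surv E n t)
      = real (deg E n 1) + (\<Sum>v\<in>{2..n}. real (deg E n 1) * (\<Sum>t<T'. taboo E n t v))"
    unfolding Suc
    by (simp add: sum.lessThan_Suc_shift surv_0 surv_Suc distrib_left sum_distrib_left
        sum.swap[where A = "{..<T'}"] del: sum.lessThan_Suc)
  also have "\<dots> \<le> real (deg E n 1) + (\<Sum>v\<in>{2..n}. real (deg E n v))"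
    using deg_mult_sum_taboo_le[OF assms(2)] by (intro add_left_mono sum_mono) auto
  also have "\<dots> = (\<Sum>v\<in>{1..n}. real (deg E n v))"
    unfolding vertices_eq_insert_1[OF assms(2)] by simp
  also have "\<dots> \<le> 2 * real (card E)"
    using sum_deg_le_twice_card[OF assms(1)] by (simp flip: of_nat_sum)
  finally show ?thesis .
qed

lemma exp_tau_graph_isolated:
  assumes "deg E n 1 = 0"
  shows "exp_tau_graph E n = 1"
proof -
  have "exp_tau_graph E n = (\<Sum>t\<in>{0}. ennreal (surv E n t))"
    unfolding exp_tau_graph_def
    by (rule suminf_finite) (auto simp: surv_Suc_isolated[OF assms] gr0_conv_Suc)
  then show ?thesis by (simp add: surv_0)
qed

lemma exp_tau_graph_le_Kac:
  assumes "E \<subseteq> pairs n" "1 \<le> n" "deg E n 1 > 0"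
  shows "exp_tau_graph E n \<le> ennreal (2 * card E / deg E n 1)"
proof -
  have "(\<Sum>t<T. ennreal (surv E n t)) \<le> ennreal (2 * card E / deg E n 1)" for T
    using deg_mult_sum_surv_le[OF assms(1,2), of T] assms(3)
    by (simp add: surv_nonneg ennreal_leI pos_le_divide_eq mult.commute)
  then show ?thesis
    unfolding exp_tau_graph_def suminf_eq_SUP by (rule SUP_least)
qed

definition pairs_at_1 :: "nat \<Rightarrow> (nat \<times> nat) set" where
  "pairs_at_1 n = {e \<in> pairs n. fst e = 1}"

lemma card_pairs_at_1: "card (pairs_at_1 n) = n - 1"
proof -
  have "pairs_at_1 n = Pair 1 ` {2..n}"
    by (auto simp: pairs_at_1_def pairs_def)
  then show ?thesis by (simp add: card_image inj_on_def)
qed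

lemma deg_1_eq_card:
  assumes "E \<subseteq> pairs n"
  shows "deg E n 1 = card (E \<inter> pairs_at_1 n)"
proof -
  have "{v \<in> {1..n}. adj E 1 v} = snd ` (E \<inter> pairs_at_1 n)"
    using assms by (force simp: adj_def pairs_at_1_def pairs_def)
  moreover have "inj_on snd (E \<inter> pairs_at_1 n)"
    by (auto simp: inj_on_def pairs_at_1_def prod_eq_iff)
  ultimately show ?thesis
    by (simp add: deg_def card_image)
qed

lemma exp_tau_graph_le:
  assumes "E \<subseteq> pairs n" "1 \<le> n"
  shows "exp_tau_graph E n
           \<le> ennreal (2 + 4 * real (card (E - pairs_at_1 n)) / (real (card (E \<inter> pairs_at_1 n)) + 1))"
proof -
  define a b where "a = card (E \<inter> pairs_at_1 n)" and "b = card (E - pairs_at_1 n)"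
  have deg: "deg E n 1 = a"
    unfolding a_def by (rule deg_1_eq_card[OF assms(1)])
  have card: "card E = a + b"
    unfolding a_def b_def using finite_subset[OF assms(1) finite_pairs] by (rule card_Int_Diff)
  show ?thesis
  proof (cases "a = 0")
    case True
    have "exp_tau_graph E n = ennreal 1"
      using exp_tau_graph_isolated deg True by simp
    also have "\<dots> \<le> ennreal (2 + 4 * real b / (real a + 1))"
      by (rule ennreal_leI) simp
    finally show ?thesis
      unfolding a_def b_def .
  next
    case False
    have "2 * real (a + b) / a = 2 + 2 * real b / a"
      using False by (simp add: field_simps)
    also have "\<dots> \<le> 2 + 4 * real b / (real a + 1)"
    proof -
      have "real b \<le> real a * real b"
        using False by (simp add: mult_le_cancel_right1)
      then show ?thesis
        using False by (simp add: field_simps)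
    qed
    finally have bound: "2 * real (card E) / deg E n 1 \<le> 2 + 4 * real b / (real a + 1)"
      unfolding deg card .
    have "exp_tau_graph E n \<le> ennreal (2 * real (card E) / deg E n 1)"
      using exp_tau_graph_le_Kac[OF assms] False deg by simp
    also have "\<dots> \<le> ennreal (2 + 4 * real b / (real a + 1))"
      using bound by (rule ennreal_leI)
    finally show ?thesis
      unfolding a_def b_def .
  qed
qed

definition random_subset_prob :: "real \<Rightarrow> 'a set \<Rightarrow> 'a set \<Rightarrow> real" where
  "random_subset_prob p X A = p ^ card A * (1 - p) ^ (card X - card A)"

lemma random_subset_prob_nonneg: "0 \<le> p \<Longrightarrow> p \<le> 1 \<Longrightarrow> 0 \<le> random_subset_prob p X A"
  by (simp add: random_subset_prob_def)

lemma sum_Pow_Un_disjoint: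
  assumes "X \<inter> Y = {}"
  shows "(\<Sum>E\<in>Pow (X \<union> Y). f E) = (\<Sum>A\<in>Pow X. \<Sum>B\<in>Pow Y. f (A \<union> B))"
proof -
  have "(\<Sum>E\<in>Pow (X \<union> Y). f E) = (\<Sum>(A, B) \<in> Pow X \<times> Pow Y. f (A \<union> B))"
    by (rule sum.reindex_bij_witness[where i = "\<lambda>(A, B). A \<union> B" and j = "\<lambda>E. (E \<inter> X, E \<inter> Y)"])
       (use assms in \<open>auto simp: Int_absorb2 simp flip: Int_Un_distrib\<close>)
  then show ?thesis
    by (simp add: sum.cartesian_product)
qed

lemma random_subset_prob_Un:
  assumes "finite X" "finite Y" "X \<inter> Y = {}" "A \<subseteq> X" "B \<subseteq> Y"
  shows "random_subset_prob p (X \<union> Y) (A \<union> B) = random_subset_prob p X A * random_subset_prob p Y B"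
proof -
  have "finite A" "finite B" "A \<inter> B = {}"
    using assms finite_subset by auto
  then have "card (A \<union> B) = card A + card B"
    by (rule card_Un_disjoint)
  moreover have "card (X \<union> Y) = card X + card Y"
    using assms(1-3) by (rule card_Un_disjoint)
  moreover have "card A \<le> card X" "card B \<le> card Y"
    using assms by (auto intro: card_mono)
  ultimately have "card (X \<union> Y) - card (A \<union> B) = (card X - card A) + (card Y - card B)"
    by simp
  then show ?thesis
    using \<open>card (A \<union> B) = card A + card B\<close> by (simp add: random_subset_prob_def power_add)
qed

lemma sum_random_subset_prob_Un:
  assumes "finite X" "finite Y" "X \<inter> Y = {}"
  shows "(\<Sum>E\<in>Pow (X \<union> Y). random_subset_prob p (X \<union> Y) E * (f (E \<inter> X) * g (E \<inter> Y)))
       = (\<Sum>A\<in>Pow X. random_subset_prob p X A * f A) * (\<Sum>B\<in>Pow Y. random_subset_prob p Y B * g B)"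
proof -
  have "(A \<union> B) \<inter> X = A" "(A \<union> B) \<inter> Y = B" if "A \<subseteq> X" "B \<subseteq> Y" for A B
    using that assms(3) by auto
  then show ?thesis
    unfolding sum_Pow_Un_disjoint[OF assms(3)] sum_product
    by (intro sum.cong refl) (simp add: random_subset_prob_Un[OF assms] mult_ac)
qed

lemma sum_Pow_card:
  assumes "finite X"
  shows "(\<Sum>A\<in>Pow X. g (card A)) = (\<Sum>k\<le>card X. of_nat (card X choose k) * g k)"
proof -
  have "(\<Sum>A\<in>Pow X. g (card A)) = (\<Sum>k\<le>card X. \<Sum>A | A \<in> Pow X \<and> card A = k. g (card A))"
    using assms by (intro sum.group[symmetric]) (auto intro: card_mono)
  also have "\<dots> = (\<Sum>k\<le>card X. of_nat (card X choose k) * g k)"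
  proof (intro sum.cong refl)
    fix k
    have "{A. A \<in> Pow X \<and> card A = k} = {A. A \<subseteq> X \<and> card A = k}"
      by auto
    then show "(\<Sum>A | A \<in> Pow X \<and> card A = k. g (card A)) = of_nat (card X choose k) * g k"
      by (simp add: n_subsets[OF assms])
  qed
  finally show ?thesis .
qed

lemma sum_random_subset_prob_card:
  assumes "finite X"
  shows "(\<Sum>A\<in>Pow X. random_subset_prob p X A * g (card A))
       = (\<Sum>k\<le>card X. real (card X choose k) * p ^ k * (1 - p) ^ (card X - k) * g k)"
  unfolding random_subset_prob_def
  using sum_Pow_card[OF assms, of "\<lambda>k. p ^ k * (1 - p) ^ (card X - k) * g k"]
  by (simp add: mult_ac)

lemma binomial_distribution_sum:
  "(\<Sum>k\<le>N. real (N choose k) * p ^ k * (1 - p) ^ (N - k)) = 1"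
  using binomial_ring[of p "1 - p" N] by simp

lemma binomial_distribution_mean:
  "(\<Sum>k\<le>N. real (N choose k) * p ^ k * (1 - p) ^ (N - k) * k) = N * p"
proof (cases N)
  case 0
  then show ?thesis by simp
next
  case (Suc M)
  have absorb: "real (Suc M choose Suc k) * real (Suc k) = real (Suc M) * real (M choose k)" for k
    using Suc_times_binomial_eq[of M k] by (metis of_nat_mult)
  have "(\<Sum>k\<le>N. real (N choose k) * p ^ k * (1 - p) ^ (N - k) * k)
      = (\<Sum>k\<le>M. real (Suc M choose Suc k) * real (Suc k) * p ^ Suc k * (1 - p) ^ (M - k))"
    unfolding Suc sum.atMost_Suc_shift by (simp add: mult_ac)
  also have "\<dots> = real (Suc M) * p * (\<Sum>k\<le>M. real (M choose k) * p ^ k * (1 - p) ^ (M - k))"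
    unfolding absorb sum_distrib_left by (simp add: mult_ac)
  finally show ?thesis
    unfolding binomial_distribution_sum Suc by simp
qed

lemma binomial_distribution_inverse_moment:
  "real (N + 1) * p * (\<Sum>k\<le>N. real (N choose k) * p ^ k * (1 - p) ^ (N - k) / (real k + 1))
     = 1 - (1 - p) ^ (N + 1)"
proof -
  have absorb: "real (Suc N choose Suc k) * real (Suc k) = real (Suc N) * real (N choose k)" for k
    using Suc_times_binomial_eq[of N k] by (metis of_nat_mult)
  have "real (N + 1) * p * (real (N choose k) * p ^ k * (1 - p) ^ (N - k) / (real k + 1))
      = real (Suc N choose Suc k) * p ^ Suc k * (1 - p) ^ (Suc N - Suc k)" for k
  proof -
    have "real (N + 1) * p * (real (N choose k) * p ^ k * (1 - p) ^ (N - k) / (real k + 1))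
        = (real (Suc N) * real (N choose k)) * p ^ Suc k * (1 - p) ^ (N - k) / real (Suc k)"
      by (simp add: field_simps)
    also have "\<dots> = real (Suc N choose Suc k) * p ^ Suc k * (1 - p) ^ (Suc N - Suc k)"
      unfolding absorb[symmetric] by (simp del: binomial_Suc_Suc)
    finally show ?thesis .
  qed
  then have "real (N + 1) * p * (\<Sum>k\<le>N. real (N choose k) * p ^ k * (1 - p) ^ (N - k) / (real k + 1))
      = (\<Sum>k\<le>N. real (Suc N choose Suc k) * p ^ Suc k * (1 - p) ^ (Suc N - Suc k))"
    unfolding sum_distrib_left by simp
  also have "\<dots> = 1 - (1 - p) ^ (N + 1)"
    using binomial_distribution_sum[of "Suc N" p] unfolding sum.atMost_Suc_shift by simp
  finally show ?thesis .
qed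

lemma exp_tau_le:
  assumes "1 \<le> n" "0 \<le> p" "p \<le> 1"
  shows "exp_tau n p \<le> ennreal (2 + 4 * real (card (pairs n - pairs_at_1 n)) / n)"
proof -
  define S R where "S = pairs_at_1 n" and "R = pairs n - pairs_at_1 n"
  have SR: "finite S" "finite R" "S \<inter> R = {}" and pairs_eq: "pairs n = S \<union> R"
    using finite_pairs by (auto simp: S_def R_def pairs_at_1_def)
  have card_S: "real (card S + 1) = n"
    using assms(1) by (simp add: S_def card_pairs_at_1)
  let ?\<pi> = "random_subset_prob p"
  let ?I = "\<Sum>k\<le>card S. real (card S choose k) * p ^ k * (1 - p) ^ (card S - k) / (real k + 1)"
  \<comment> \<open>the bound of \<open>exp_tau_graph_le\<close> as a sum of products of a function of \<open>E \<inter> S\<close>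
     and one of \<open>E \<inter> R\<close>, the shape required by \<open>sum_random_subset_prob_Un\<close>\<close>
  let ?h = "\<lambda>E. 2 * (1 * 1) + 4 * (1 / (real (card (E \<inter> S)) + 1) * real (card (E \<inter> R)))"
  have "exp_tau n p \<le> (\<Sum>E\<in>Pow (pairs n). ennreal (?\<pi> (pairs n) E) * ennreal (?h E))"
    unfolding exp_tau_def random_subset_prob_def[symmetric]
  proof (intro sum_mono mult_left_mono)
    fix E assume "E \<in> Pow (pairs n)"
    then have "E - pairs_at_1 n = E \<inter> R"
      by (auto simp: R_def)
    then show "exp_tau_graph E n \<le> ennreal (?h E)"
      using exp_tau_graph_le[of E n] \<open>E \<in> Pow (pairs n)\<close> assms(1) by (simp add: S_def)
  qed simp
  also have "\<dots> = (\<Sum>E\<in>Pow (S \<union> R). ennreal (?\<pi> (S \<union> R) E * ?h E))"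
    unfolding pairs_eq using assms(2,3)
    by (intro sum.cong refl ennreal_mult[symmetric]) (simp_all add: random_subset_prob_nonneg)
  also have "\<dots> = ennreal (\<Sum>E\<in>Pow (S \<union> R). ?\<pi> (S \<union> R) E * ?h E)"
    using assms(2,3) by (intro sum_ennreal) (simp add: random_subset_prob_nonneg)
  also have "(\<Sum>E\<in>Pow (S \<union> R). ?\<pi> (S \<union> R) E * ?h E)
      = 2 * ((\<Sum>A\<in>Pow S. ?\<pi> S A * 1) * (\<Sum>B\<in>Pow R. ?\<pi> R B * 1))
        + 4 * ((\<Sum>A\<in>Pow S. ?\<pi> S A * (1 / (real (card A) + 1))) * (\<Sum>B\<in>Pow R. ?\<pi> R B * card B))"
    by (simp only: distrib_left sum.distrib mult.left_commute[of _ 2] mult.left_commute[of _ 4]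
        flip: sum_distrib_left sum_random_subset_prob_Un[OF SR])
  also have "\<dots> = 2 + 4 * real (card R) * (p * ?I)"
    using sum_random_subset_prob_card[OF SR(1), of p "\<lambda>_. 1"]
      sum_random_subset_prob_card[OF SR(1), of p "\<lambda>k. 1 / (real k + 1)"]
      sum_random_subset_prob_card[OF SR(2), of p "\<lambda>_. 1"]
      sum_random_subset_prob_card[OF SR(2), of p real]
    by (simp add: binomial_distribution_sum binomial_distribution_mean)
  also have "p * ?I = (1 - (1 - p) ^ (card S + 1)) / n"
    using binomial_distribution_inverse_moment[of "card S" p, unfolded card_S] assms(1)
    by (simp add: eq_divide_eq mult_ac)
  also have "2 + 4 * real (card R) * ((1 - (1 - p) ^ (card S + 1)) / n) \<le> 2 + 4 * real (card R) * (1 / n)"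
    using assms(2,3) by (intro add_left_mono mult_left_mono divide_right_mono) auto
  finally show ?thesis
    by (simp add: R_def ennreal_leI)
qed

theorem lemma2:
  shows "\<exists>C::real. C > 0 \<and> (\<forall>n::nat. \<forall>p::real. n \<ge> 2 \<longrightarrow> 0 \<le> p \<longrightarrow> p \<le> 1 \<longrightarrow>
           exp_tau n p / ennreal (real n - 1) \<le> ennreal C)"
proof (intro exI[of _ 10] conjI allI impI)
  fix n :: nat and p :: real
  assume n: "n \<ge> 2" and p: "0 \<le> p" "p \<le> 1"
  have "card (pairs n - pairs_at_1 n) \<le> n * n"
    using card_mono[OF finite_pairs Diff_subset] card_pairs_le order_trans by blast
  then have "4 * real (card (pairs n - pairs_at_1 n)) / n \<le> 4 * n"
    using n by (simp add: divide_le_eq flip: of_nat_mult)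
  then have bound: "2 + 4 * real (card (pairs n - pairs_at_1 n)) / n \<le> (real n - 1) * 10"
    using n by simp
  have "exp_tau n p \<le> ennreal (2 + 4 * real (card (pairs n - pairs_at_1 n)) / n)"
    using exp_tau_le n p by simp
  also have "\<dots> \<le> ennreal ((real n - 1) * 10)"
    using bound by (rule ennreal_leI)
  also have "\<dots> = ennreal (real n - 1) * ennreal 10"
    using n by (intro ennreal_mult) simp_all
  finally have "exp_tau n p \<le> ennreal (real n - 1) * ennreal 10" .
  then show "exp_tau n p / ennreal (real n - 1) \<le> ennreal 10"
    using n by (intro divide_le_posI_ennreal) simp_all
qed simp

end
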